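(* For every $b>1$, every $b'$ with $1\le b'<b$, and every positive integer $n$, there is an instance with $n+2$ vertices in which $C_o(s)=1$ while the partially naive agent with true bias $b$ and believed bias $b'$, with ties in its choices broken in favor of edges not leading directly to $t$, incurs cost $b^n$. In particular, optimistic partially naive agents can have cost ratio exponential in the number of vertices.
   Context: An instance is a finite directed acyclic graph $G=(V,E)$ with nonnegative edge costs $c(u,v)$, start node $s$ and target node $t$, where $t$ is the unique node with no outgoing edges; $C_o(u)$ is the minimum cost of a $u$–$t$ path. For a parameter $\beta$, the sophisticated agent with bias $\beta$ is defined by $C^{\beta}(t)=0$ and, for $u\ne t$, $S^\beta(u)\in\arg\min_{v:(u,v)\in E}(\beta\,c(u,v)+C^\beta(v))$, $C^\beta(u)=c(u,S^\beta(u))+C^\beta(S^\beta(u))$. Let $C_s'=C^{b'}$. The partially naive agent with true bias $b$ and believed bias $b'$: $C_p(t)=0$, and for $u\neq t$, $S_p(u)\in\arg\min_{v:(u,v)\in E}(b\,c(u,v)+C_s'(v))$, $C_p(u)=c(u,S_p(u))+C_p(S_p(u))$; its incurred cost is $C_p(s)$. It is called optimistic if $b'<b$. *)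

theory Defs
  imports Complex_Main
begin

definition is_instance ::
  "nat set \<Rightarrow> (nat \<times> nat) set \<Rightarrow> (nat \<times> nat \<Rightarrow> real) \<Rightarrow> nat \<Rightarrow> nat \<Rightarrow> bool" where
  "is_instance V E c s t \<longleftrightarrow>
     finite V \<and> E \<subseteq> V \<times> V \<and> acyclic E \<and> s \<in> V \<and> t \<in> V \<and>
     (\<forall>u\<in>V. (\<not> (\<exists>v. (u, v) \<in> E)) \<longleftrightarrow> u = t) \<and>
     (\<forall>e\<in>E. 0 \<le> c e)"

definition is_path :: "(nat \<times> nat) set \<Rightarrow> nat list \<Rightarrow> nat \<Rightarrow> nat \<Rightarrow> bool" where
  "is_path E p u v \<longleftrightarrow> p \<noteq> [] \<and> hd p = u \<and> last p = v \<and>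
     (\<forall>i. i + 1 < length p \<longrightarrow> (p ! i, p ! (i + 1)) \<in> E)"

definition path_cost :: "(nat \<times> nat \<Rightarrow> real) \<Rightarrow> nat list \<Rightarrow> real" where
  "path_cost c p = (\<Sum>i<length p - 1. c (p ! i, p ! (i + 1)))"

definition opt_cost :: "(nat \<times> nat) set \<Rightarrow> (nat \<times> nat \<Rightarrow> real) \<Rightarrow> nat \<Rightarrow> nat \<Rightarrow> real" where
  "opt_cost E c u t = (INF p \<in> {p. is_path E p u t}. path_cost c p)"

definition soph_agent ::
  "nat set \<Rightarrow> (nat \<times> nat) set \<Rightarrow> (nat \<times> nat \<Rightarrow> real) \<Rightarrow> nat \<Rightarrow> real
     \<Rightarrow> (nat \<Rightarrow> nat) \<Rightarrow> (nat \<Rightarrow> real) \<Rightarrow> bool" where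
  "soph_agent V E c t \<beta> S C \<longleftrightarrow> C t = 0 \<and>
     (\<forall>u\<in>V - {t}. (u, S u) \<in> E \<and>
        (\<forall>v. (u, v) \<in> E \<longrightarrow> \<beta> * c (u, S u) + C (S u) \<le> \<beta> * c (u, v) + C v) \<and>
        C u = c (u, S u) + C (S u))"

text \<open>Sp, Cp form the partially naive agent with true bias b, given C_s' = Cs
  (cost function of the sophisticated agent with believed bias), with ties broken
  in favour of edges not leading directly to t.\<close>
definition pn_agent ::
  "nat set \<Rightarrow> (nat \<times> nat) set \<Rightarrow> (nat \<times> nat \<Rightarrow> real) \<Rightarrow> nat \<Rightarrow> real \<Rightarrow> (nat \<Rightarrow> real)
     \<Rightarrow> (nat \<Rightarrow> nat) \<Rightarrow> (nat \<Rightarrow> real) \<Rightarrow> bool" where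
  "pn_agent V E c t b Cs Sp Cp \<longleftrightarrow> Cp t = 0 \<and>
     (\<forall>u\<in>V - {t}. (u, Sp u) \<in> E \<and>
        (\<forall>v. (u, v) \<in> E \<longrightarrow> b * c (u, Sp u) + Cs (Sp u) \<le> b * c (u, v) + Cs v) \<and>
        (Sp u = t \<longrightarrow> (\<forall>v. (u, v) \<in> E \<and> v \<noteq> t \<longrightarrow>
            b * c (u, t) + Cs t < b * c (u, v) + Cs v)) \<and>
        Cp u = c (u, Sp u) + Cp (Sp u))"

end

theory Submission
  imports Defs
begin

text \<open>The instance is a chain \<open>0 \<rightarrow> 1 \<rightarrow> \<dots> \<rightarrow> n\<close> of free edges, with a shortcut
  \<open>u \<rightarrow> t = n + 1\<close> of cost \<open>b ^ u\<close> from every chain vertex. The cheapest path takes the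
  shortcut at once. A sophisticated agent with bias \<open>b' < b\<close> also leaves at once from every
  vertex, since waiting one step costs \<open>b\<close> times more and it weighs the current shortcut only
  by \<open>b'\<close>; so its cost from \<open>u\<close> is \<open>b ^ u\<close>. The partially naive agent weighs the current
  shortcut by \<open>b\<close> and compares it with this prediction \<open>b ^ (u + 1)\<close>: a tie, which it breaks
  by moving on, so it walks to \<open>n\<close> and pays \<open>b ^ n\<close>.\<close>

definition chain_vertices :: "nat \<Rightarrow> nat set" where
  "chain_vertices n = {0..Suc n}"

definition chain_edges :: "nat \<Rightarrow> (nat \<times> nat) set" where
  "chain_edges n = {(u, v). (u < n \<and> v = Suc u) \<or> (u \<le> n \<and> v = Suc n)}"

definition chain_cost :: "real \<Rightarrow> nat \<Rightarrow> nat \<times> nat \<Rightarrow> real" where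
  "chain_cost b n = (\<lambda>(u, v). if v = Suc n then b ^ u else 0)"

definition chain_soph_cost :: "real \<Rightarrow> nat \<Rightarrow> nat \<Rightarrow> real" where
  "chain_soph_cost b n u = (if u = Suc n then 0 else b ^ u)"

definition chain_pn_choice :: "nat \<Rightarrow> nat \<Rightarrow> nat" where
  "chain_pn_choice n u = (if u < n then Suc u else Suc n)"

definition chain_pn_cost :: "real \<Rightarrow> nat \<Rightarrow> nat \<Rightarrow> real" where
  "chain_pn_cost b n u = (if u \<le> n then b ^ n else 0)"

lemma mem_chain_edges [simp]:
  "(u, v) \<in> chain_edges n \<longleftrightarrow> (u < n \<and> v = Suc u) \<or> (u \<le> n \<and> v = Suc n)"
  by (simp add: chain_edges_def)

lemma chain_cost_simps [simp]:
  "chain_cost b n (u, Suc n) = b ^ u"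
  "v \<noteq> Suc n \<Longrightarrow> chain_cost b n (u, v) = 0"
  by (simp_all add: chain_cost_def)

lemma mem_chain_vertices: "u \<in> chain_vertices n \<longleftrightarrow> u \<le> Suc n"
  by (simp add: chain_vertices_def)

lemma is_instance_chain:
  assumes "b > 0"
  shows "is_instance (chain_vertices n) (chain_edges n) (chain_cost b n) 0 (Suc n)"
  unfolding is_instance_def
proof (intro conjI)
  have "chain_edges n \<subseteq> less_than"
    by auto
  then show "acyclic (chain_edges n)"
    by (meson wf_acyclic wf_less_than wf_subset)
  show "\<forall>e\<in>chain_edges n. 0 \<le> chain_cost b n e"
    using assms by (auto simp: chain_cost_def)
qed (auto simp: chain_vertices_def)

lemma card_chain_vertices: "card (chain_vertices n) = n + 2"
  by (simp add: chain_vertices_def)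

lemma path_cost_ge_last_edge:
  assumes path: "is_path E p u v" and "u \<noteq> v" and nonneg: "\<And>e. e \<in> E \<Longrightarrow> 0 \<le> c e"
  shows "\<exists>w. (w, v) \<in> E \<and> c (w, v) \<le> path_cost c p"
proof -
  have edges: "\<And>i. i + 1 < length p \<Longrightarrow> (p ! i, p ! (i + 1)) \<in> E"
    using path by (simp add: is_path_def)
  have "length p \<ge> 2"
  proof (rule ccontr)
    assume "\<not> length p \<ge> 2"
    moreover have "p \<noteq> []" "hd p = u" "last p = v"
      using path by (auto simp: is_path_def)
    ultimately have "length p = Suc 0"
      by (cases p) (auto simp: Suc_le_eq)
    then obtain x where "p = [x]"
      by (auto simp: length_Suc_conv)
    with \<open>hd p = u\<close> \<open>last p = v\<close> \<open>u \<noteq> v\<close> show False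
      by simp
  qed
  define m where "m = length p - 2"
  have "m + 1 = length p - 1"
    using \<open>length p \<ge> 2\<close> by (simp add: m_def)
  then have last: "p ! (m + 1) = v"
    using path last_conv_nth[of p] by (simp add: is_path_def)
  have "c (p ! m, v) \<le> path_cost c p"
    unfolding path_cost_def last[symmetric]
    by (rule member_le_sum) (use \<open>length p \<ge> 2\<close> edges nonneg in \<open>auto simp: m_def\<close>)
  moreover have "(p ! m, v) \<in> E"
    using edges[of m] last \<open>length p \<ge> 2\<close> by (simp add: m_def)
  ultimately show ?thesis
    by blast
qed

lemma opt_cost_chain:
  assumes "b \<ge> 1"
  shows "opt_cost (chain_edges n) (chain_cost b n) 0 (Suc n) = 1"
  unfolding opt_cost_def
proof (rule cInf_eq_minimum)
  have "is_path (chain_edges n) [0, Suc n] 0 (Suc n)"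
    by (auto simp: is_path_def nth_Cons split: nat.splits)
  moreover have "path_cost (chain_cost b n) [0, Suc n] = 1"
    by (simp add: path_cost_def)
  ultimately show "1 \<in> path_cost (chain_cost b n) ` {p. is_path (chain_edges n) p 0 (Suc n)}"
    by force
next
  fix x assume "x \<in> path_cost (chain_cost b n) ` {p. is_path (chain_edges n) p 0 (Suc n)}"
  then obtain p where p: "is_path (chain_edges n) p 0 (Suc n)" and x: "x = path_cost (chain_cost b n) p"
    by blast
  have nonneg: "\<And>e. e \<in> chain_edges n \<Longrightarrow> 0 \<le> chain_cost b n e"
    using assms by (auto simp: chain_cost_def)
  obtain w where "(w, Suc n) \<in> chain_edges n" "chain_cost b n (w, Suc n) \<le> x"
    using path_cost_ge_last_edge[OF p Zero_not_Suc, where c = "chain_cost b n"] nonneg x by blast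
  then show "1 \<le> x"
    using one_le_power[OF assms, of w] by simp
qed


lemma soph_agentD:
  assumes "soph_agent V E c t \<beta> S C" and "u \<in> V" and "u \<noteq> t"
  shows "(u, S u) \<in> E" and "C u = c (u, S u) + C (S u)"
    and "(u, v) \<in> E \<Longrightarrow> \<beta> * c (u, S u) + C (S u) \<le> \<beta> * c (u, v) + C v"
  using assms by (auto simp: soph_agent_def)

lemma pn_agentD:
  assumes "pn_agent V E c t b Cs Sp Cp" and "u \<in> V" and "u \<noteq> t"
  shows "(u, Sp u) \<in> E" and "Cp u = c (u, Sp u) + Cp (Sp u)"
    and "Sp u = t \<Longrightarrow> (u, v) \<in> E \<Longrightarrow> v \<noteq> t \<Longrightarrow> b * c (u, t) + Cs t < b * c (u, v) + Cs v"
  using assms by (auto simp: pn_agent_def)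

lemma soph_agent_chain:
  assumes "b' \<le> b" and "b > 0"
  shows "soph_agent (chain_vertices n) (chain_edges n) (chain_cost b n) (Suc n) b'
     (\<lambda>_. Suc n) (chain_soph_cost b n)"
proof -
  have "b' * b ^ u \<le> b ^ Suc u" for u
    using assms by (simp add: mult_right_mono)
  then show ?thesis
    by (auto simp: soph_agent_def chain_soph_cost_def chain_vertices_def)
qed

lemma pn_agent_chain:
  "pn_agent (chain_vertices n) (chain_edges n) (chain_cost b n) (Suc n) b
     (chain_soph_cost b n) (chain_pn_choice n) (chain_pn_cost b n)"
  by (auto simp: pn_agent_def chain_soph_cost_def chain_pn_choice_def chain_pn_cost_def
      chain_vertices_def le_Suc_eq)

lemma soph_agent_chain_cost:
  assumes agent: "soph_agent (chain_vertices n) (chain_edges n) (chain_cost b n) (Suc n) b' S Cs"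
    and "b' < b" and "b > 0" and "u \<le> n"
  shows "Cs u = b ^ u"
proof -
  have target: "Cs (Suc n) = 0"
    using agent by (simp add: soph_agent_def)
  note at = soph_agentD[OF agent, unfolded mem_chain_vertices]
  show ?thesis
    using \<open>u \<le> n\<close>
  proof (induction u rule: inc_induct)
    show "Cs n = b ^ n"
      using at(1,2)[of n] target by auto
  next
    fix u assume "u < n" and IH: "Cs (Suc u) = b ^ Suc u"
    have "S u \<noteq> Suc u"
    proof
      assume "S u = Suc u"
      with at(3)[of u "Suc n"] IH target \<open>u < n\<close> have "b * b ^ u \<le> b' * b ^ u"
        by simp
      with \<open>b' < b\<close> \<open>b > 0\<close> show False
        by simp
    qed
    with at(1)[of u] \<open>u < n\<close> have "S u = Suc n"
      by auto
    with at(2)[of u] target \<open>u < n\<close> show "Cs u = b ^ u"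
      by simp
  qed
qed

lemma pn_agent_chain_cost:
  assumes agent: "pn_agent (chain_vertices n) (chain_edges n) (chain_cost b n) (Suc n) b Cs Sp Cp"
    and Cs: "\<And>u. u \<le> n \<Longrightarrow> Cs u = b ^ u" "Cs (Suc n) = 0" and "u \<le> n"
  shows "Cp u = b ^ n"
proof -
  have target: "Cp (Suc n) = 0"
    using agent by (simp add: pn_agent_def)
  note at = pn_agentD[OF agent, unfolded mem_chain_vertices]
  show ?thesis
    using \<open>u \<le> n\<close>
  proof (induction u rule: inc_induct)
    show "Cp n = b ^ n"
      using at(1,2)[of n] target by auto
  next
    fix u assume "u < n" and IH: "Cp (Suc u) = b ^ n"
    have "Sp u \<noteq> Suc n"
    proof
      assume "Sp u = Suc n"
      with at(3)[of u "Suc u"] Cs \<open>u < n\<close> have "b * b ^ u < b ^ Suc u"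
        by simp
      then show False
        by simp
    qed
    with at(1)[of u] \<open>u < n\<close> have "Sp u = Suc u"
      by auto
    with at(2)[of u] IH \<open>u < n\<close> show "Cp u = b ^ n"
      by simp
  qed
qed

theorem mainTheorem11:
  fixes b b' :: real and n :: nat
  assumes "b > 1" and "1 \<le> b'" and "b' < b" and "n > 0"
  shows "\<exists>V E c s t. is_instance V E c s t \<and> card V = n + 2 \<and> opt_cost E c s t = 1 \<and>
     (\<exists>S' Cs Sp Cp. soph_agent V E c t b' S' Cs \<and> pn_agent V E c t b Cs Sp Cp) \<and>
     (\<forall>S' Cs Sp Cp. soph_agent V E c t b' S' Cs \<and> pn_agent V E c t b Cs Sp Cp
        \<longrightarrow> Cp s = b ^ n)"
proof (intro exI conjI allI impI)
  have "b > 0"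
    using assms(1) by simp
  show "is_instance (chain_vertices n) (chain_edges n) (chain_cost b n) 0 (Suc n)"
    using \<open>b > 0\<close> by (rule is_instance_chain)
  show "card (chain_vertices n) = n + 2" "opt_cost (chain_edges n) (chain_cost b n) 0 (Suc n) = 1"
    using assms(1) by (simp_all add: card_chain_vertices opt_cost_chain)
  show "soph_agent (chain_vertices n) (chain_edges n) (chain_cost b n) (Suc n) b'
      (\<lambda>_. Suc n) (chain_soph_cost b n)"
    using assms(3) \<open>b > 0\<close> by (simp add: soph_agent_chain)
  show "pn_agent (chain_vertices n) (chain_edges n) (chain_cost b n) (Suc n) b
      (chain_soph_cost b n) (chain_pn_choice n) (chain_pn_cost b n)"
    by (rule pn_agent_chain)
next
  fix S' Cs Sp Cp
  assume agents: "soph_agent (chain_vertices n) (chain_edges n) (chain_cost b n) (Suc n) b' S' Cs \<and>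
      pn_agent (chain_vertices n) (chain_edges n) (chain_cost b n) (Suc n) b Cs Sp Cp"
  have "Cs (Suc n) = 0"
    using agents by (simp add: soph_agent_def)
  moreover have "\<And>u. u \<le> n \<Longrightarrow> Cs u = b ^ u"
    using agents assms(1,3) soph_agent_chain_cost by auto
  ultimately show "Cp 0 = b ^ n"
    using agents pn_agent_chain_cost by blast
qed

end
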